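(* Let $w=w(x_1,\dots,x_n)$ be a multilinear commutator word. Assume that $T$ is a normal subgroup of a group $G$ and $a_1,\dots,a_n$ are elements of $G$ such that every element of the form $w(y_1,\dots,y_n)$ with $y_i\in a_iT$ for all $i$ has at most $m$ conjugates in $G$. Then every $w$-value of $T$ (i.e. every $w(t_1,\dots,t_n)$ with $t_i\in T$) has at most $m^{2^n}$ conjugates in $G$.
   Context: Multilinear commutator words are defined recursively: $x$ is a multilinear commutator, and if $u,v$ are multilinear commutators in disjoint sets of variables then $[u,v]$ is one. *)

theory Defs
  imports "HOL-Algebra.Algebra"
begin

datatype cword = Var nat | Comm cword cword

fun vars :: "cword \<Rightarrow> nat set" where
  "vars (Var i) = {i}"
| "vars (Comm u v) = vars u \<union> vars v"

fun multilinear :: "cword \<Rightarrow> bool" where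
  "multilinear (Var i) = True"
| "multilinear (Comm u v) = (multilinear u \<and> multilinear v \<and> vars u \<inter> vars v = {})"

definition gcomm :: "('a, 'b) monoid_scheme \<Rightarrow> 'a \<Rightarrow> 'a \<Rightarrow> 'a" where
  "gcomm G a b = inv\<^bsub>G\<^esub> a \<otimes>\<^bsub>G\<^esub> inv\<^bsub>G\<^esub> b \<otimes>\<^bsub>G\<^esub> a \<otimes>\<^bsub>G\<^esub> b"

fun weval :: "('a, 'b) monoid_scheme \<Rightarrow> cword \<Rightarrow> (nat \<Rightarrow> 'a) \<Rightarrow> 'a" where
  "weval G (Var i) f = f i"
| "weval G (Comm u v) f = gcomm G (weval G u f) (weval G v f)"

definition conj_class :: "('a, 'b) monoid_scheme \<Rightarrow> 'a \<Rightarrow> 'a set" where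
  "conj_class G x = {g \<otimes>\<^bsub>G\<^esub> x \<otimes>\<^bsub>G\<^esub> inv\<^bsub>G\<^esub> g | g. g \<in> carrier G}"

definition at_most_conj :: "('a, 'b) monoid_scheme \<Rightarrow> 'a \<Rightarrow> nat \<Rightarrow> bool" where
  "at_most_conj G x m \<longleftrightarrow> finite (conj_class G x) \<and> card (conj_class G x) \<le> m"

end

theory Submission
  imports Defs
begin

text \<open>If \<open>t \<in> T\<close> and \<open>z\<close> is any tuple, then \<open>w\<close> evaluated at \<open>z\<close> with its \<open>j\<close>-th
  entry replaced by \<open>t\<close> equals \<open>w(y)\<^sup>-\<^sup>1 w(z)\<close> for a tuple \<open>y\<close> congruent to \<open>z\<close> modulo
  \<open>T\<close> in every coordinate. This follows by induction on \<open>w\<close> from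
  \<open>[A\<^sup>-\<^sup>1B, V] = ([A,V]\<^sup>k)\<^sup>-\<^sup>1 [B,V]\<close> and \<open>[U, A\<^sup>-\<^sup>1B] = [U,B] ([U,A]\<^sup>k)\<^sup>-\<^sup>1\<close>, where
  \<open>x\<^sup>k = k\<^sup>-\<^sup>1xk\<close> and \<open>k = A\<^sup>-\<^sup>1B \<in> T\<close>: conjugation by an element of \<open>T\<close> preserves cosets
  of \<open>T\<close>, so it can be absorbed into the tuple. Since \<open>x\<^sup>-\<^sup>1y\<close> has at most \<open>|x\<^sup>G| |y\<^sup>G|\<close>
  conjugates, moving the arguments from the cosets \<open>a\<^sub>i T\<close> into \<open>T\<close> one at a time
  squares the bound at each step.\<close>

lemma (in group) mult_inv_cancel_left [simp]:
  "x \<in> carrier G \<Longrightarrow> y \<in> carrier G \<Longrightarrow> x \<otimes> (inv x \<otimes> y) = y"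
  by (simp add: m_assoc [symmetric])

lemma (in group) inv_mult_cancel_left [simp]:
  "x \<in> carrier G \<Longrightarrow> y \<in> carrier G \<Longrightarrow> inv x \<otimes> (x \<otimes> y) = y"
  by (simp add: m_assoc [symmetric])

lemma (in group) mult_inv_as_inv_conj_mult:
  assumes "x \<in> carrier G" "y \<in> carrier G"
  shows "x \<otimes> inv y = inv (inv (y \<otimes> inv x) \<otimes> y \<otimes> (y \<otimes> inv x)) \<otimes> x"
  using assms by (simp add: m_assoc inv_mult_group)

lemma finite_vars: "finite (vars w)"
  by (induction w) auto

lemma weval_cong: "\<forall>i\<in>vars w. f i = g i \<Longrightarrow> weval G w f = weval G w g"
  by (induction w) auto

lemma (in group) gcomm_closed [simp]:
  "a \<in> carrier G \<Longrightarrow> b \<in> carrier G \<Longrightarrow> gcomm G a b \<in> carrier G"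
  by (simp add: gcomm_def)

lemma (in group) gcomm_inv_mult_left:
  assumes "A \<in> carrier G" "B \<in> carrier G" "V \<in> carrier G"
  shows "gcomm G (inv A \<otimes> B) V =
    inv (inv (inv A \<otimes> B) \<otimes> gcomm G A V \<otimes> (inv A \<otimes> B)) \<otimes> gcomm G B V"
  using assms by (simp add: gcomm_def m_assoc inv_mult_group)

lemma (in group) gcomm_inv_mult_right:
  assumes "U \<in> carrier G" "A \<in> carrier G" "B \<in> carrier G"
  shows "gcomm G U (inv A \<otimes> B) =
    gcomm G U B \<otimes> inv (inv (inv A \<otimes> B) \<otimes> gcomm G U A \<otimes> (inv A \<otimes> B))"
  using assms by (simp add: gcomm_def m_assoc inv_mult_group)

lemma (in group) weval_closed: "\<forall>i\<in>vars w. f i \<in> carrier G \<Longrightarrow> weval G w f \<in> carrier G"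
  by (induction w) auto

lemma (in group_hom) hom_gcomm:
  "a \<in> carrier G \<Longrightarrow> b \<in> carrier G \<Longrightarrow> h (gcomm G a b) = gcomm H (h a) (h b)"
  by (simp add: gcomm_def)

lemma (in group_hom) hom_weval:
  "\<forall>i\<in>vars w. f i \<in> carrier G \<Longrightarrow> h (weval G w f) = weval H w (h \<circ> f)"
  by (induction w) (auto simp: hom_gcomm G.weval_closed)

lemma (in group) conj_group_hom: "k \<in> carrier G \<Longrightarrow> group_hom G G (\<lambda>x. inv k \<otimes> x \<otimes> k)"
  by (auto simp: group_hom_def group_hom_axioms_def hom_def is_group m_assoc)

lemma (in group) weval_conj:
  "k \<in> carrier G \<Longrightarrow> \<forall>i\<in>vars w. f i \<in> carrier G \<Longrightarrow>
   weval G w (\<lambda>i. inv k \<otimes> f i \<otimes> k) = inv k \<otimes> weval G w f \<otimes> k"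
  using group_hom.hom_weval[OF conj_group_hom] by (simp add: comp_def)

lemma (in normal) rcong_refl: "x \<in> carrier G \<Longrightarrow> (x, x) \<in> rcong H"
  by (simp add: r_congruent_def)

lemma (in normal) rcong_sym: "(x, y) \<in> rcong H \<Longrightarrow> (y, x) \<in> rcong H"
  using equiv_rcong[OF is_group] by (auto simp: equiv_def dest: symD)

lemma (in normal) rcong_trans: "(x, y) \<in> rcong H \<Longrightarrow> (y, z) \<in> rcong H \<Longrightarrow> (x, z) \<in> rcong H"
  using equiv_rcong[OF is_group] by (auto simp: equiv_def dest: transD)

lemma (in normal) rcong_conj: "x \<in> carrier G \<Longrightarrow> k \<in> H \<Longrightarrow> (x, inv k \<otimes> x \<otimes> k) \<in> rcong H"
  using inv_op_closed1[of x "inv k"] by (simp add: r_congruent_def m_assoc [symmetric])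

lemma (in normal) rcong_mult_inv:
  assumes "(x, y) \<in> rcong H"
  shows "x \<otimes> inv y \<in> H"
proof -
  have x: "x \<in> carrier G" and y: "y \<in> carrier G" and "inv x \<otimes> y \<in> H"
    using assms by (auto simp: r_congruent_def)
  then have "inv (x \<otimes> (inv x \<otimes> y) \<otimes> inv x) \<in> H"
    using inv_op_closed2 by blast
  then show ?thesis
    using x y by (simp add: inv_mult_group)
qed

lemma (in normal) rcong_iff_rcos_eq:
  "(x, y) \<in> rcong H \<longleftrightarrow> x \<in> carrier G \<and> y \<in> carrier G \<and> H #> x = H #> y"
proof
  assume "(x, y) \<in> rcong H"
  then have "x \<in> carrier G" "y \<in> carrier G" "y \<in> x <# H"
    using l_coset_eq_rcong[OF is_group] by (auto simp: r_congruent_def)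
  then show "x \<in> carrier G \<and> y \<in> carrier G \<and> H #> x = H #> y"
    using coset_eq repr_independence[OF _ _ subgroup_axioms] by auto
next
  assume "x \<in> carrier G \<and> y \<in> carrier G \<and> H #> x = H #> y"
  then have x: "x \<in> carrier G" and y: "y \<in> carrier G" and "y \<otimes> inv x \<in> H"
    using repr_independenceD[OF subgroup_axioms] rcos_module_imp[OF is_group] by auto
  then have "inv x \<otimes> (y \<otimes> inv x) \<otimes> x \<in> H"
    by (simp add: inv_op_closed1)
  then show "(x, y) \<in> rcong H"
    using x y by (simp add: r_congruent_def m_assoc)
qed

lemma (in normal) weval_rcong:
  assumes "\<forall>i\<in>vars w. (f i, g i) \<in> rcong H"
  shows "(weval G w f, weval G w g) \<in> rcong H"
proof -
  interpret Mod: group_hom G "G Mod H" "\<lambda>x. H #> x"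
    using r_coset_hom_Mod factorgroup_is_group by (simp add: group_hom_def group_hom_axioms_def is_group)
  have "\<forall>i\<in>vars w. f i \<in> carrier G \<and> g i \<in> carrier G \<and> H #> f i = H #> g i"
    using assms rcong_iff_rcos_eq by blast
  then have "H #> weval G w f = H #> weval G w g"
    using Mod.hom_weval weval_cong[of w "(#>) H \<circ> f" "(#>) H \<circ> g"] by (simp add: weval_closed)
  then show ?thesis
    using assms by (simp add: rcong_iff_rcos_eq weval_closed)
qed

lemma (in normal) weval_conj_rcong:
  assumes "\<forall>i\<in>vars w. (z i, y i) \<in> rcong H" and "k \<in> H"
  shows "\<exists>y'. (\<forall>i\<in>vars w. (z i, y' i) \<in> rcong H) \<and> weval G w y' = inv k \<otimes> weval G w y \<otimes> k"
proof -
  have y: "\<forall>i\<in>vars w. y i \<in> carrier G"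
    using assms(1) by (auto simp: r_congruent_def)
  then have "\<forall>i\<in>vars w. (z i, inv k \<otimes> y i \<otimes> k) \<in> rcong H"
    using assms rcong_conj rcong_trans by blast
  moreover have "weval G w (\<lambda>i. inv k \<otimes> y i \<otimes> k) = inv k \<otimes> weval G w y \<otimes> k"
    using y assms(2) by (simp add: weval_conj)
  ultimately show ?thesis
    by (intro exI[of _ "\<lambda>i. inv k \<otimes> y i \<otimes> k"]) simp
qed

lemma (in normal) weval_update_factor_Comm_left:
  assumes disj: "vars u \<inter> vars v = {}" and j: "j \<in> vars u"
    and z: "\<forall>i\<in>vars (Comm u v). z i \<in> carrier G"
    and zy: "\<forall>i\<in>vars u. (z i, y i) \<in> rcong H"
    and factor: "weval G u (z(j := t)) = inv (weval G u y) \<otimes> weval G u z"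
  shows "\<exists>y'. (\<forall>i\<in>vars (Comm u v). (z i, y' i) \<in> rcong H) \<and>
    weval G (Comm u v) (z(j := t)) = inv (weval G (Comm u v) y') \<otimes> weval G (Comm u v) z"
proof -
  define A B V where "A = weval G u y" and "B = weval G u z" and "V = weval G v z"
  have carr: "A \<in> carrier G" "B \<in> carrier G" "V \<in> carrier G"
    using z zy unfolding A_def B_def V_def by (auto simp: r_congruent_def intro!: weval_closed)
  have "(A, B) \<in> rcong H"
    using weval_rcong[OF zy] rcong_sym unfolding A_def B_def by blast
  then have k: "inv A \<otimes> B \<in> H"
    by (simp add: r_congruent_def)
  have "weval G v (z(j := t)) = V"
    using disj j unfolding V_def by (intro weval_cong) auto
  then have "weval G (Comm u v) (z(j := t)) = gcomm G (inv A \<otimes> B) V"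
    using factor unfolding A_def B_def by simp
  moreover let ?z = "override_on z y (vars u)"
  have "\<forall>i\<in>vars (Comm u v). (z i, ?z i) \<in> rcong H"
    using z zy rcong_refl by (auto simp: override_on_def)
  then obtain y' where "\<forall>i\<in>vars (Comm u v). (z i, y' i) \<in> rcong H"
    and "weval G (Comm u v) y' = inv (inv A \<otimes> B) \<otimes> weval G (Comm u v) ?z \<otimes> (inv A \<otimes> B)"
    using weval_conj_rcong k by blast
  moreover have "weval G (Comm u v) ?z = gcomm G A V"
    using disj unfolding A_def V_def
    by (auto simp: disjoint_iff override_on_def intro!: arg_cong2[where f = "gcomm G"] weval_cong)
  ultimately show ?thesis
    using gcomm_inv_mult_left[OF carr] unfolding B_def V_def by auto
qed

lemma (in normal) weval_update_factor_Comm_right: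
  assumes disj: "vars u \<inter> vars v = {}" and j: "j \<in> vars v"
    and z: "\<forall>i\<in>vars (Comm u v). z i \<in> carrier G"
    and zy: "\<forall>i\<in>vars v. (z i, y i) \<in> rcong H"
    and factor: "weval G v (z(j := t)) = inv (weval G v y) \<otimes> weval G v z"
  shows "\<exists>y'. (\<forall>i\<in>vars (Comm u v). (z i, y' i) \<in> rcong H) \<and>
    weval G (Comm u v) (z(j := t)) = inv (weval G (Comm u v) y') \<otimes> weval G (Comm u v) z"
proof -
  define U A B where "U = weval G u z" and "A = weval G v y" and "B = weval G v z"
  have carr: "U \<in> carrier G" "A \<in> carrier G" "B \<in> carrier G"
    using z zy unfolding U_def A_def B_def by (auto simp: r_congruent_def intro!: weval_closed)
  have "(A, B) \<in> rcong H"
    using weval_rcong[OF zy] rcong_sym unfolding A_def B_def by blast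
  then have k: "inv A \<otimes> B \<in> H"
    by (simp add: r_congruent_def)
  let ?z = "override_on z y (vars v)"
  have "\<forall>i\<in>vars (Comm u v). (z i, ?z i) \<in> rcong H"
    using z zy rcong_refl by (auto simp: override_on_def)
  moreover have "weval G (Comm u v) ?z = gcomm G U A"
    using disj unfolding U_def A_def
    by (auto simp: disjoint_iff override_on_def intro!: arg_cong2[where f = "gcomm G"] weval_cong)
  ultimately obtain y1 where y1: "\<forall>i\<in>vars (Comm u v). (z i, y1 i) \<in> rcong H"
    and Q: "weval G (Comm u v) y1 = inv (inv A \<otimes> B) \<otimes> gcomm G U A \<otimes> (inv A \<otimes> B)"
    using weval_conj_rcong[OF _ k] by metis
  define Q P where "Q = weval G (Comm u v) y1" and "P = weval G (Comm u v) z"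
  have "(Q, P) \<in> rcong H"
    using weval_rcong[OF y1] rcong_sym unfolding Q_def P_def by blast
  then obtain y' where "\<forall>i\<in>vars (Comm u v). (z i, y' i) \<in> rcong H"
    and "weval G (Comm u v) y' = inv (Q \<otimes> inv P) \<otimes> Q \<otimes> (Q \<otimes> inv P)"
    using weval_conj_rcong[OF y1] rcong_mult_inv unfolding Q_def by blast
  moreover have "weval G u (z(j := t)) = U"
    using disj j unfolding U_def by (intro weval_cong) auto
  then have "weval G (Comm u v) (z(j := t)) = P \<otimes> inv Q"
    using factor gcomm_inv_mult_right[OF carr] Q unfolding U_def A_def B_def P_def Q_def by simp
  moreover have "P \<in> carrier G" "Q \<in> carrier G"
    using z y1 unfolding P_def Q_def by (auto simp: r_congruent_def intro!: gcomm_closed weval_closed)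
  ultimately show ?thesis
    using mult_inv_as_inv_conj_mult unfolding P_def by metis
qed

lemma (in normal) weval_update_factor:
  assumes "multilinear w" and "j \<in> vars w" and "t \<in> H" and "\<forall>i\<in>vars w. z i \<in> carrier G"
  shows "\<exists>y. (\<forall>i\<in>vars w. (z i, y i) \<in> rcong H) \<and>
    weval G w (z(j := t)) = inv (weval G w y) \<otimes> weval G w z"
  using assms
proof (induction w)
  case (Var i)
  then have "i = j" and zj: "z j \<in> carrier G" and tc: "t \<in> carrier G"
    by auto
  have "(z j, z j \<otimes> inv t) \<in> rcong H"
    using zj tc \<open>t \<in> H\<close> by (simp add: r_congruent_def m_assoc [symmetric])
  moreover have "t = inv (z j \<otimes> inv t) \<otimes> z j"
    using zj tc by (simp add: inv_mult_group m_assoc)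
  ultimately show ?case
    using \<open>i = j\<close> by (intro exI[of _ "z(j := z j \<otimes> inv t)"]) simp
next
  case (Comm u v)
  then have disj: "vars u \<inter> vars v = {}" and z: "\<forall>i\<in>vars (Comm u v). z i \<in> carrier G"
    by auto
  from Comm consider "j \<in> vars u" | "j \<in> vars v"
    by auto
  then show ?case
  proof cases
    case 1
    have "multilinear u" and "\<forall>i\<in>vars u. z i \<in> carrier G"
      using Comm.prems z by auto
    then obtain y where "\<forall>i\<in>vars u. (z i, y i) \<in> rcong H"
      and "weval G u (z(j := t)) = inv (weval G u y) \<otimes> weval G u z"
      using Comm.IH(1)[OF _ 1 \<open>t \<in> H\<close>] by blast
    then show ?thesis
      by (rule weval_update_factor_Comm_left[OF disj 1 z])
  next
    case 2
    have "multilinear v" and "\<forall>i\<in>vars v. z i \<in> carrier G"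
      using Comm.prems z by auto
    then obtain y where "\<forall>i\<in>vars v. (z i, y i) \<in> rcong H"
      and "weval G v (z(j := t)) = inv (weval G v y) \<otimes> weval G v z"
      using Comm.IH(2)[OF _ 2 \<open>t \<in> H\<close>] by blast
    then show ?thesis
      by (rule weval_update_factor_Comm_right[OF disj 2 z])
  qed
qed

lemma (in group) conj_class_inv_mult_subset:
  assumes "x \<in> carrier G" "y \<in> carrier G"
  shows "conj_class G (inv x \<otimes> y) \<subseteq> (\<lambda>(p, q). inv p \<otimes> q) ` (conj_class G x \<times> conj_class G y)"
proof
  fix c assume "c \<in> conj_class G (inv x \<otimes> y)"
  then obtain g where g: "g \<in> carrier G" and c: "c = g \<otimes> (inv x \<otimes> y) \<otimes> inv g"
    unfolding conj_class_def by blast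
  have "c = inv (g \<otimes> x \<otimes> inv g) \<otimes> (g \<otimes> y \<otimes> inv g)"
    using assms g c by (simp add: m_assoc inv_mult_group)
  moreover have "(g \<otimes> x \<otimes> inv g, g \<otimes> y \<otimes> inv g) \<in> conj_class G x \<times> conj_class G y"
    using g unfolding conj_class_def by blast
  ultimately show "c \<in> (\<lambda>(p, q). inv p \<otimes> q) ` (conj_class G x \<times> conj_class G y)"
    by force
qed

lemma (in group) at_most_conj_inv_mult:
  assumes "x \<in> carrier G" "y \<in> carrier G" "at_most_conj G x M" "at_most_conj G y N"
  shows "at_most_conj G (inv x \<otimes> y) (M * N)"
proof -
  let ?P = "conj_class G x \<times> conj_class G y"
  have fin: "finite ?P" and "card ?P \<le> M * N"
    using assms(3,4) by (auto simp: at_most_conj_def card_cartesian_product intro: mult_le_mono)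
  then have "card ((\<lambda>(p, q). inv p \<otimes> q) ` ?P) \<le> M * N"
    using card_image_le le_trans by blast
  then show ?thesis
    using conj_class_inv_mult_subset[OF assms(1,2)] fin
    unfolding at_most_conj_def by (meson card_mono finite_imageI finite_subset le_trans)
qed

lemma (in normal) at_most_conj_weval_cosets:
  assumes w: "multilinear w" and a: "\<forall>i\<in>vars w. a i \<in> carrier G"
    and bound: "\<And>y. \<forall>i\<in>vars w. (a i, y i) \<in> rcong H \<Longrightarrow> at_most_conj G (weval G w y) m"
    and "S \<subseteq> vars w"
    and "\<forall>i\<in>vars w. (if i \<in> S then \<one> else a i, y i) \<in> rcong H"
  shows "at_most_conj G (weval G w y) (m ^ 2 ^ card S)"
proof -
  have "finite S"
    using \<open>S \<subseteq> vars w\<close> finite_vars finite_subset by blast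
  then show ?thesis
    using assms(4,5)
  proof (induction S arbitrary: y rule: finite_induct)
    case empty
    then show ?case using bound by simp
  next
    case (insert j S)
    let ?b = "\<lambda>i. if i \<in> S then \<one> else a i"
    \<comment> \<open>\<open>y\<close> is \<open>?z\<close> with its entry \<open>a j \<otimes> y j \<in> a j <# H\<close> replaced by \<open>y j \<in> H\<close>\<close>
    let ?z = "y(j := a j \<otimes> y j)"
    have j: "j \<in> vars w" and aj: "a j \<in> carrier G"
      using insert a by auto
    have "(\<one>, y j) \<in> rcong H"
      using bspec[OF insert.prems(2) j] by simp
    then have yj: "y j \<in> H" and yjc: "y j \<in> carrier G"
      by (auto simp: r_congruent_def)
    have bz: "\<forall>i\<in>vars w. (?b i, ?z i) \<in> rcong H"
      using insert aj yj yjc by (auto simp: r_congruent_def m_assoc [symmetric])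
    then have "\<forall>i\<in>vars w. ?z i \<in> carrier G"
      by (auto simp: r_congruent_def)
    then obtain y' where zy': "\<forall>i\<in>vars w. (?z i, y' i) \<in> rcong H"
      and factor: "weval G w (?z(j := y j)) = inv (weval G w y') \<otimes> weval G w ?z"
      using weval_update_factor[OF w j yj] by blast
    have "\<forall>i\<in>vars w. (?b i, y' i) \<in> rcong H"
      using bz zy' rcong_trans by blast
    then have "at_most_conj G (inv (weval G w y') \<otimes> weval G w ?z) (m ^ 2 ^ card S * m ^ 2 ^ card S)"
      using insert bz zy'
      by (intro at_most_conj_inv_mult) (auto simp: r_congruent_def intro!: weval_closed)
    then show ?case
      using factor insert by (simp add: power_add [symmetric] mult_2)
  qed
qed

theorem lemma3p4:
  fixes G :: "('a, 'b) monoid_scheme" and w :: cword and T :: "'a set"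
    and a :: "nat \<Rightarrow> 'a" and m :: nat
  assumes "group G"
    and "multilinear w"
    and "T \<lhd> G"
    and "\<forall>i \<in> vars w. a i \<in> carrier G"
    and "\<forall>y. (\<forall>i \<in> vars w. y i \<in> a i <#\<^bsub>G\<^esub> T) \<longrightarrow> at_most_conj G (weval G w y) m"
  shows "\<forall>t. (\<forall>i \<in> vars w. t i \<in> T) \<longrightarrow> at_most_conj G (weval G w t) (m ^ (2 ^ card (vars w)))"
proof (intro allI impI)
  interpret normal T G by fact
  fix t assume t: "\<forall>i\<in>vars w. t i \<in> T"
  have "\<forall>i\<in>vars w. (a i, y i) \<in> rcong\<^bsub>G\<^esub> T \<Longrightarrow> at_most_conj G (weval G w y) m" for y
    using assms(4,5) l_coset_eq_rcong[OF is_group] by auto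
  moreover have "\<forall>i\<in>vars w. (if i \<in> vars w then \<one>\<^bsub>G\<^esub> else a i, t i) \<in> rcong\<^bsub>G\<^esub> T"
    using t by (auto simp: r_congruent_def)
  ultimately show "at_most_conj G (weval G w t) (m ^ 2 ^ card (vars w))"
    using at_most_conj_weval_cosets assms(2,4) by blast
qed

end
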